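(* Let $k$ be a field of characteristic $p>0$, $P$ a finite poset, $R=\mathcal{R}_k[J(P)]$ the Hibi ring and $\mathfrak{m}=R_+$. Then \[ \liminf_{e\to\infty}\frac{\nu(p^e)}{p^e}\ \ge\ \operatorname{rank}^*P+2, \] where $\nu(p^e)=\max\{r\in\mathbb{N}\mid\mathfrak{m}^r\not\subseteq\mathfrak{m}^{[p^e]}\}$.
   Context: Let $P=\{p_1,\dots,p_N\}$ be a finite poset and $J(P)$ the set of poset ideals of $P$ (down-closed subsets, including $\emptyset$ and $P$). The Hibi ring is $\mathcal{R}_k[J(P)]=k[\,T\prod_{p_i\in I}X_i\mid I\in J(P)\,]\subseteq k[T,X_1,\dots,X_N]$, each generator in degree $1$; $\mathfrak{m}=R_+$ is generated by these generators; $\mathfrak{m}^{[q]}=(x^q\mid x\in\mathfrak{m})$. $x\lessdot y$ means $x<y$ with no $z$ satisfying $x<z<y$. A path is a sequence $C=(q_1,\dots,q_t)$ of distinct elements of $P$ with $q_1$ minimal in $P$, consecutive elements related by $q_i\lessdot q_{i+1}$ or $q_{i+1}\lessdot q_i$, and $q_{t-1}\lessdot q_t$ (when $t\ge2$); it is maximal if $q_t$ is maximal in $P$. For $1<i<t$, $q_i$ is locally maximal if $q_{i-1}\lessdot q_i$ and $q_{i+1}\lessdot q_i$, locally minimal if $q_i\lessdot q_{i-1}$ and $q_i\lessdot q_{i+1}$; $q_1$ counts as locally minimal and $q_t$ as locally maximal. The decomposition $C=A_1+D_1+\cdots+D_{n-1}+A_n$ splits $C$ into consecutive blocks: $A_1$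 is $q_1$ through the first locally maximal element, $D_1$ the following elements through the next locally minimal element, $A_2$ the following elements through the next locally maximal element, etc., $A_n$ ending at $q_t$; $t(A_i)$ is the last element of $A_i$, $V(\cdot)$ the set of elements of a block, $\langle A\rangle=\{q\in P\mid q\le t(A)\}$, and $\langle A_i\setminus t(A_i)\rangle$ the poset ideal generated by the elements of $A_i$ other than $t(A_i)$. $C$ satisfies ( * ) if for all $1\le i\le n-1$: (1) $V(D_i)\cap(\bigcup_{m=1}^{i-1}\langle A_m\rangle\cup\langle A_i\setminus t(A_i)\rangle\cup\{t(A_i)\})=\emptyset$; (2) $V(A_{i+1})\cap\bigcup_{m=1}^{i}\langle A_m\rangle=\emptyset$. $\operatorname{len}^*C=\#\{i\mid q_i\lessdot q_{i+1}\}$, and $\operatorname{rank}^*P$ is the maximum of $\operatorname{len}^*C$ over maximal paths $C$ satisfying ( * ). *)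

theory Defs
  imports Complex_Main "HOL-Library.Poly_Mapping" "HOL-Library.Extended_Real"
    "HOL-Library.Liminf_Limsup"
begin

definition covers :: "'a::order set \<Rightarrow> 'a \<Rightarrow> 'a \<Rightarrow> bool" where
  "covers P x y \<longleftrightarrow> x \<in> P \<and> y \<in> P \<and> x < y \<and> \<not> (\<exists>z\<in>P. x < z \<and> z < y)"

definition minimal_in :: "'a::order set \<Rightarrow> 'a \<Rightarrow> bool" where
  "minimal_in P x \<longleftrightarrow> x \<in> P \<and> \<not> (\<exists>y\<in>P. y < x)"

definition maximal_in :: "'a::order set \<Rightarrow> 'a \<Rightarrow> bool" where
  "maximal_in P x \<longleftrightarrow> x \<in> P \<and> \<not> (\<exists>y\<in>P. x < y)"

text \<open>Poset ideals J(P): down-closed subsets (including the empty set and P).\<close>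
definition poset_ideals :: "'a::order set \<Rightarrow> 'a set set" where
  "poset_ideals P = {I. I \<subseteq> P \<and> (\<forall>x\<in>I. \<forall>y\<in>P. y \<le> x \<longrightarrow> y \<in> I)}"

definition down_set :: "'a::order set \<Rightarrow> 'a set \<Rightarrow> 'a set" where
  "down_set P S = {q \<in> P. \<exists>s\<in>S. q \<le> s}"

section \<open>Paths (lists q_1 ... q_t, 0-indexed)\<close>

definition is_path :: "'a::order set \<Rightarrow> 'a list \<Rightarrow> bool" where
  "is_path P xs \<longleftrightarrow> xs \<noteq> [] \<and> distinct xs \<and> set xs \<subseteq> P \<and> minimal_in P (hd xs) \<and>
     (\<forall>i. Suc i < length xs \<longrightarrow>
        covers P (xs ! i) (xs ! Suc i) \<or> covers P (xs ! Suc i) (xs ! i)) \<and>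
     (2 \<le> length xs \<longrightarrow> covers P (xs ! (length xs - 2)) (xs ! (length xs - 1)))"

definition is_maximal_path :: "'a::order set \<Rightarrow> 'a list \<Rightarrow> bool" where
  "is_maximal_path P xs \<longleftrightarrow> is_path P xs \<and> maximal_in P (last xs)"

definition loc_max :: "'a::order set \<Rightarrow> 'a list \<Rightarrow> nat \<Rightarrow> bool" where
  "loc_max P xs i \<longleftrightarrow> i < length xs \<and>
     (i = length xs - 1 \<or>
      (0 < i \<and> covers P (xs ! (i - 1)) (xs ! i) \<and> covers P (xs ! Suc i) (xs ! i)))"

definition loc_min :: "'a::order set \<Rightarrow> 'a list \<Rightarrow> nat \<Rightarrow> bool" where
  "loc_min P xs i \<longleftrightarrow> i < length xs \<and>
     (i = 0 \<or>
      (Suc i < length xs \<and> covers P (xs ! i) (xs ! (i - 1)) \<and> covers P (xs ! i) (xs ! Suc i)))"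

text \<open>Sorted positions of the locally maximal elements (M) and locally minimal elements (mi).
  With 0-indexed blocks, A_1 has positions [0, M!0], D_(i+1) has positions (M!i, mi!(i+1)],
  and A_(i+1) (for i > 0) has positions (mi!i, M!i].\<close>
definition lmax_pos :: "'a::order set \<Rightarrow> 'a list \<Rightarrow> nat list" where
  "lmax_pos P xs = sorted_list_of_set {i. loc_max P xs i}"

definition lmin_pos :: "'a::order set \<Rightarrow> 'a list \<Rightarrow> nat list" where
  "lmin_pos P xs = sorted_list_of_set {i. loc_min P xs i}"

text \<open>Positions of the block A_(i+1) (0-indexed block number i).\<close>
definition A_pos :: "'a::order set \<Rightarrow> 'a list \<Rightarrow> nat \<Rightarrow> nat set" where
  "A_pos P xs i = {j. j \<le> lmax_pos P xs ! i \<and> (i = 0 \<or> lmin_pos P xs ! i < j)}"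

text \<open>Positions of the block D_(i+1) (0-indexed block number i).\<close>
definition D_pos :: "'a::order set \<Rightarrow> 'a list \<Rightarrow> nat \<Rightarrow> nat set" where
  "D_pos P xs i = {j. lmax_pos P xs ! i < j \<and> j \<le> lmin_pos P xs ! Suc i}"

definition tA :: "'a::order set \<Rightarrow> 'a list \<Rightarrow> nat \<Rightarrow> 'a" where
  "tA P xs i = xs ! (lmax_pos P xs ! i)"

definition angA :: "'a::order set \<Rightarrow> 'a list \<Rightarrow> nat \<Rightarrow> 'a set" where
  "angA P xs i = down_set P {tA P xs i}"

text \<open>Condition (*), with paper index i (1..n-1) corresponding to 0-indexed i (0..n-2).\<close>
definition star_cond :: "'a::order set \<Rightarrow> 'a list \<Rightarrow> bool" where
  "star_cond P xs \<longleftrightarrow>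
     (\<forall>i. Suc i < length (lmax_pos P xs) \<longrightarrow>
        ((\<lambda>j. xs ! j) ` D_pos P xs i \<inter>
           ((\<Union>l<i. angA P xs l) \<union>
            down_set P ((\<lambda>j. xs ! j) ` (A_pos P xs i - {lmax_pos P xs ! i})) \<union>
            {tA P xs i}) = {}) \<and>
        ((\<lambda>j. xs ! j) ` A_pos P xs (Suc i) \<inter> (\<Union>l\<le>i. angA P xs l) = {}))"

definition len_star :: "'a::order set \<Rightarrow> 'a list \<Rightarrow> nat" where
  "len_star P xs = card {i. Suc i < length xs \<and> covers P (xs ! i) (xs ! Suc i)}"

definition rank_star :: "'a::order set \<Rightarrow> nat" where
  "rank_star P = Max {len_star P xs | xs. is_maximal_path P xs \<and> star_cond P xs}"

text \<open>Polynomials in the variables T = None and X_p = Some p, coefficients in 'k.\<close>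
type_synonym ('a, 'k) mpoly = "('a option \<Rightarrow>\<^sub>0 nat) \<Rightarrow>\<^sub>0 'k"

definition hibi_gen :: "'a set \<Rightarrow> ('a, 'k::comm_ring_1) mpoly" where
  "hibi_gen I = Poly_Mapping.single
     (Poly_Mapping.single None 1 + (\<Sum>p\<in>I. Poly_Mapping.single (Some p) 1)) 1"

definition hibi_gens :: "'a::order set \<Rightarrow> ('a, 'k::comm_ring_1) mpoly set" where
  "hibi_gens P = hibi_gen ` poset_ideals P"

inductive_set hibi_ring :: "'a::order set \<Rightarrow> ('a, 'k::field) mpoly set" for P where
  const: "Poly_Mapping.single 0 c \<in> hibi_ring P"
| gen: "g \<in> hibi_gens P \<Longrightarrow> g \<in> hibi_ring P"
| add: "f \<in> hibi_ring P \<Longrightarrow> g \<in> hibi_ring P \<Longrightarrow> f + g \<in> hibi_ring P"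
| mult: "f \<in> hibi_ring P \<Longrightarrow> g \<in> hibi_ring P \<Longrightarrow> f * g \<in> hibi_ring P"

inductive_set ideal_gen :: "'r::comm_ring_1 set \<Rightarrow> 'r set \<Rightarrow> 'r set" for R S where
  zero: "0 \<in> ideal_gen R S"
| step: "r \<in> R \<Longrightarrow> s \<in> S \<Longrightarrow> f \<in> ideal_gen R S \<Longrightarrow> r * s + f \<in> ideal_gen R S"

definition hibi_max :: "'a::order set \<Rightarrow> ('a, 'k::field) mpoly set" where
  "hibi_max P = ideal_gen (hibi_ring P) (hibi_gens P)"

definition ideal_power :: "'r::comm_ring_1 set \<Rightarrow> 'r set \<Rightarrow> nat \<Rightarrow> 'r set" where
  "ideal_power R I r = ideal_gen R {prod_list xs | xs. length xs = r \<and> set xs \<subseteq> I}"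

definition frobenius_power :: "'r::comm_ring_1 set \<Rightarrow> 'r set \<Rightarrow> nat \<Rightarrow> 'r set" where
  "frobenius_power R I q = ideal_gen R {x ^ q | x. x \<in> I}"

definition hibi_nu :: "'k::field itself \<Rightarrow> 'a::order set \<Rightarrow> nat \<Rightarrow> nat" where
  "hibi_nu _ P q = Max {r. \<not> (ideal_power (hibi_ring P) (hibi_max P :: ('a, 'k) mpoly set) r
                           \<subseteq> frobenius_power (hibi_ring P) (hibi_max P) q)}"

end

theory Submission
  imports Defs "HOL-Computational_Algebra.Primes"
begin

text \<open>Fix a maximal path \<open>C = (q\<^sub>1, \<dots>, q\<^sub>t)\<close> satisfying (*) with \<open>len\<^sup>* C = u = rank\<^sup>* P\<close>,
  and let \<open>f(p)\<close> be one more than the number of up-steps of \<open>C\<close> after the first position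
  lying above \<open>p\<close>. Condition (*) forces \<open>C\<close> never to go up between a position and a later
  position strictly below it; hence \<open>f\<close> is antitone, \<open>f(q\<^sub>1) = u + 1\<close>, \<open>f(q\<^sub>t) = 1\<close>, and \<open>f\<close> drops
  by exactly one along every up-step. The ideals \<open>J\<^sub>j = {p. f(p) \<ge> j}\<close>, \<open>j = 1, \<dots>, u + 2\<close>,
  give the monomial \<open>w = \<Prod>\<^sub>j (T \<Prod>\<^bsub>p \<in> J\<^sub>j\<^esub> X\<^sub>p)\<^bsup>q - 1\<^esup> \<in> m\<^bsup>(u + 2)(q - 1)\<^esup>\<close>.

  In characteristic \<open>p\<close> with \<open>q = p\<^sup>e\<close>, every monomial occurring in \<open>m\<^bsup>[q]\<^esup>\<close> has exponent
  \<open>z + q e\<^sub>I\<close> with \<open>z\<close> in the cone of the Hibi ring and \<open>I\<close> a poset ideal, and the shape of \<open>f\<close>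
  rules this out for \<open>w\<close>. Hence \<open>\<nu>(q) \<ge> (u + 2)(q - 1)\<close>, which gives the bound on the
  \<open>liminf\<close>. That \<open>\<nu>(q)\<close> is finite at all follows by pigeonhole: a product of more than
  \<open>|J(P)| (q - 1)\<close> generators contains a \<open>q\<close>-th power.\<close>

lemma ideal_gen_add:
  assumes "x \<in> ideal_gen R S" "y \<in> ideal_gen R S"
  shows "x + y \<in> ideal_gen R S"
  using assms
proof (induction x rule: ideal_gen.induct)
  case zero
  then show ?case by simp
next
  case (step r s f)
  then show ?case
    using ideal_gen.step[of r R s S "f + y"] by (simp add: add.assoc)
qed

lemma ideal_gen_mult_left:
  assumes "x \<in> ideal_gen R S" "a \<in> R"
    and closed: "\<And>u v. u \<in> R \<Longrightarrow> v \<in> R \<Longrightarrow> u * v \<in> R"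
  shows "a * x \<in> ideal_gen R S"
  using assms(1)
proof (induction x rule: ideal_gen.induct)
  case zero
  then show ?case by (simp add: ideal_gen.zero)
next
  case (step r s f)
  have "a * (r * s + f) = (a * r) * s + a * f" by (simp add: algebra_simps)
  then show ?case using step closed[OF assms(2) step(1)] by (simp add: ideal_gen.step)
qed

lemma ideal_gen_base:
  assumes "s \<in> S" "1 \<in> R"
  shows "s \<in> ideal_gen R S"
  using ideal_gen.step[OF assms(2) assms(1) ideal_gen.zero] by simp

lemma ideal_gen_mono:
  assumes "S \<subseteq> T"
  shows "ideal_gen R S \<subseteq> ideal_gen R T"
proof
  fix x assume "x \<in> ideal_gen R S"
  then show "x \<in> ideal_gen R T"
    by (induction x rule: ideal_gen.induct) (use assms in \<open>auto intro: ideal_gen.intros\<close>)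
qed

lemma ideal_gen_subset_ideal_gen:
  assumes "S \<subseteq> ideal_gen R T"
    and closed: "\<And>u v. u \<in> R \<Longrightarrow> v \<in> R \<Longrightarrow> u * v \<in> R"
  shows "ideal_gen R S \<subseteq> ideal_gen R T"
proof
  fix x assume "x \<in> ideal_gen R S"
  then show "x \<in> ideal_gen R T"
  proof (induction x rule: ideal_gen.induct)
    case zero
    then show ?case by (simp add: ideal_gen.zero)
  next
    case (step r s f)
    then show ?case
      using ideal_gen_mult_left[OF _ step(1) closed] assms(1) by (meson ideal_gen_add subsetD)
  qed
qed

lemma ideal_gen_mult:
  assumes "x \<in> ideal_gen R S" "y \<in> ideal_gen R T"
    and closed: "\<And>u v. u \<in> R \<Longrightarrow> v \<in> R \<Longrightarrow> u * v \<in> R"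
  shows "x * y \<in> ideal_gen R {s * t | s t. s \<in> S \<and> t \<in> T}"
  using assms(1)
proof (induction x rule: ideal_gen.induct)
  case zero
  then show ?case by (simp add: ideal_gen.zero)
next
  case (step r s f)
  have "s * y \<in> ideal_gen R {s * t | s t. s \<in> S \<and> t \<in> T}"
    using assms(2)
  proof (induction y rule: ideal_gen.induct)
    case zero
    then show ?case by (simp add: ideal_gen.zero)
  next
    case (step r' t g)
    have "s * (r' * t + g) = r' * (s * t) + s * g" by (simp add: algebra_simps)
    then show ?case using step \<open>s \<in> S\<close> by (auto intro: ideal_gen.step)
  qed
  then have "r * (s * y) \<in> ideal_gen R {s * t | s t. s \<in> S \<and> t \<in> T}"
    by (rule ideal_gen_mult_left[OF _ step(1) closed])
  moreover have "(r * s + f) * y = r * (s * y) + f * y" by (simp add: algebra_simps)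
  ultimately show ?case using step(4) ideal_gen_add by simp
qed

lemma hibi_ring_one: "(1 :: ('a::order, 'k::field) mpoly) \<in> hibi_ring P"
  using hibi_ring.const[of 1 P] by simp

lemma hibi_gens_subset_hibi_max: "hibi_gens P \<subseteq> (hibi_max P :: ('a::order, 'k::field) mpoly set)"
  unfolding hibi_max_def using ideal_gen_base[OF _ hibi_ring_one] by blast

lemma finite_poset_ideals: "finite P \<Longrightarrow> finite (poset_ideals P)"
  by (rule finite_subset[of _ "Pow P"]) (auto simp: poset_ideals_def)

lemma finite_hibi_gens: "finite P \<Longrightarrow> finite (hibi_gens P)"
  by (simp add: hibi_gens_def finite_poset_ideals)

lemma prod_list_hibi_ring:
  "set xs \<subseteq> hibi_ring P \<Longrightarrow> prod_list xs \<in> (hibi_ring P :: ('a::order, 'k::field) mpoly set)"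
  by (induction xs) (auto simp: hibi_ring_one hibi_ring.mult)

section \<open>Exponents of monomials of the Hibi ring\<close>

definition hibi_cone :: "'a::order set \<Rightarrow> ('a option \<Rightarrow>\<^sub>0 nat) \<Rightarrow> bool" where
  "hibi_cone P v \<longleftrightarrow>
     (\<forall>a\<in>P. \<forall>b\<in>P. a \<le> b \<longrightarrow> Poly_Mapping.lookup v (Some b) \<le> Poly_Mapping.lookup v (Some a)) \<and>
     (\<forall>a\<in>P. Poly_Mapping.lookup v (Some a) \<le> Poly_Mapping.lookup v None)"

definition ideal_exp :: "'a set \<Rightarrow> ('a option \<Rightarrow>\<^sub>0 nat)" where
  "ideal_exp I = Poly_Mapping.single None 1 + (\<Sum>p\<in>I. Poly_Mapping.single (Some p) 1)"

lemma lookup_ideal_exp_None: "Poly_Mapping.lookup (ideal_exp I) None = 1"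
  by (simp add: ideal_exp_def lookup_add lookup_sum lookup_single)

lemma lookup_ideal_exp_Some:
  "finite I \<Longrightarrow> Poly_Mapping.lookup (ideal_exp I) (Some p) = (if p \<in> I then 1 else 0)"
  by (simp add: ideal_exp_def lookup_add lookup_sum lookup_single when_def)

lemma hibi_gen_eq_single: "hibi_gen I = Poly_Mapping.single (ideal_exp I) 1"
  by (simp add: hibi_gen_def ideal_exp_def)

lemma hibi_cone_zero: "hibi_cone P 0"
  by (simp add: hibi_cone_def)

lemma hibi_cone_add: "hibi_cone P a \<Longrightarrow> hibi_cone P b \<Longrightarrow> hibi_cone P (a + b)"
  unfolding hibi_cone_def lookup_add by (meson add_mono)

lemma hibi_cone_ideal_exp:
  assumes "finite P" "I \<in> poset_ideals P"
  shows "hibi_cone P (ideal_exp I)"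
proof -
  have "finite I" using assms by (auto simp: poset_ideals_def intro: finite_subset)
  then show ?thesis
    using assms(2) by (auto simp: hibi_cone_def lookup_ideal_exp_Some lookup_ideal_exp_None poset_ideals_def)
qed

lemma keys_hibi_ring:
  assumes "f \<in> hibi_ring P" "finite P" "k \<in> Poly_Mapping.keys f"
  shows "hibi_cone P k"
  using assms(1,3)
proof (induction f arbitrary: k rule: hibi_ring.induct)
  case (const c)
  then show ?case by (simp add: hibi_cone_zero split: if_splits)
next
  case (gen g)
  then obtain I where "I \<in> poset_ideals P" "g = hibi_gen I" by (auto simp: hibi_gens_def)
  then show ?case using gen.prems hibi_cone_ideal_exp[OF assms(2)] by (simp add: hibi_gen_eq_single)
next
  case (add f g)
  then show ?case using keys_add[of f g] by blast
next
  case (mult f g)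
  then show ?case using keys_mult[of f g] hibi_cone_add by blast
qed

lemma keys_hibi_max:
  assumes "x \<in> hibi_max P" "finite P" "k \<in> Poly_Mapping.keys x"
  shows "\<exists>h I. hibi_cone P h \<and> I \<in> poset_ideals P \<and> k = h + ideal_exp I"
  using assms(1,3) unfolding hibi_max_def
proof (induction x arbitrary: k rule: ideal_gen.induct)
  case zero
  then show ?case by simp
next
  case (step r s f)
  obtain I where I: "I \<in> poset_ideals P" "s = hibi_gen I"
    using step(2) by (auto simp: hibi_gens_def)
  show ?case
  proof (cases "k \<in> Poly_Mapping.keys (r * s)")
    case True
    then obtain a b where "k = a + b" "a \<in> Poly_Mapping.keys r" "b \<in> Poly_Mapping.keys s"
      using keys_mult[of r s] by blast
    then show ?thesis
      using I keys_hibi_ring[OF step(1) assms(2)] by (auto simp: hibi_gen_eq_single)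
  next
    case False
    then show ?thesis using step keys_add[of "r * s" f] by blast
  qed
qed

primrec smul :: "nat \<Rightarrow> ('b \<Rightarrow>\<^sub>0 nat) \<Rightarrow> ('b \<Rightarrow>\<^sub>0 nat)" where
  "smul 0 a = 0"
| "smul (Suc n) a = a + smul n a"

lemma lookup_smul: "Poly_Mapping.lookup (smul n a) k = n * Poly_Mapping.lookup a k"
  by (induction n) (simp_all add: lookup_add)

lemma hibi_cone_smul: "hibi_cone P h \<Longrightarrow> hibi_cone P (smul q h)"
  unfolding hibi_cone_def lookup_smul by (meson mult_le_mono2)

lemma single_power:
  "Poly_Mapping.single a (c::'k::comm_semiring_1) ^ n = Poly_Mapping.single (smul n a) (c ^ n)"
  by (induction n) (simp_all add: mult_single)

lemma CHAR_mpoly: "CHAR(('a, 'k::comm_ring_1) mpoly) = CHAR('k)"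
proof (rule CHAR_eqI)
  show "of_nat CHAR('k) = (0::('a, 'k) mpoly)"
    by (metis of_nat_CHAR single_of_nat single_zero)
next
  fix n assume "of_nat n = (0::('a, 'k) mpoly)"
  then have "Poly_Mapping.lookup (of_nat n :: ('a, 'k) mpoly) 0 = 0" by simp
  then have "(of_nat n :: 'k) = 0" by (simp add: lookup_of_nat)
  then show "CHAR('k) dvd n" by (simp add: of_nat_eq_0_iff_char_dvd)
qed

lemma poly_mapping_sum_single:
  "(x::'b \<Rightarrow>\<^sub>0 'k::comm_monoid_add) =
     (\<Sum>k\<in>Poly_Mapping.keys x. Poly_Mapping.single k (Poly_Mapping.lookup x k))"
  by (rule poly_mapping_eqI) (simp add: lookup_sum lookup_single when_def in_keys_iff sum.delta')

lemma keys_frobenius: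
  fixes x :: "('a, 'k::field) mpoly"
  assumes "prime CHAR('k)" "q = CHAR('k) ^ e"
  shows "Poly_Mapping.keys (x ^ q) \<subseteq> smul q ` Poly_Mapping.keys x"
proof -
  have "x ^ q = (\<Sum>k\<in>Poly_Mapping.keys x. Poly_Mapping.single k (Poly_Mapping.lookup x k)) ^ q"
    by (subst poly_mapping_sum_single[of x]) simp
  also have "\<dots> = (\<Sum>k\<in>Poly_Mapping.keys x. Poly_Mapping.single k (Poly_Mapping.lookup x k) ^ q)"
    by (rule freshmans_dream_sum') (use assms in \<open>simp_all add: CHAR_mpoly\<close>)
  also have "\<dots> = (\<Sum>k\<in>Poly_Mapping.keys x. Poly_Mapping.single (smul q k) (Poly_Mapping.lookup x k ^ q))"
    by (simp add: single_power)
  finally show ?thesis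
    using keys_sum[of "\<lambda>k. Poly_Mapping.single (smul q k) (Poly_Mapping.lookup x k ^ q)"] by auto
qed

lemma keys_frobenius_power:
  fixes y :: "('a::order, 'k::field) mpoly"
  assumes "y \<in> frobenius_power (hibi_ring P) (hibi_max P) q" "finite P"
    and "prime CHAR('k)" "q = CHAR('k) ^ e" and "k \<in> Poly_Mapping.keys y"
  shows "\<exists>h h' I. hibi_cone P h \<and> hibi_cone P h' \<and> I \<in> poset_ideals P \<and>
           k = h + smul q (h' + ideal_exp I)"
  using assms(1,5) unfolding frobenius_power_def
proof (induction y arbitrary: k rule: ideal_gen.induct)
  case zero
  then show ?case by simp
next
  case (step r s f)
  show ?case
  proof (cases "k \<in> Poly_Mapping.keys (r * s)")
    case True
    obtain x where x: "x \<in> hibi_max P" "s = x ^ q" using step(2) by blast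
    obtain a b where ab: "k = a + b" "a \<in> Poly_Mapping.keys r" "b \<in> Poly_Mapping.keys s"
      using True keys_mult[of r s] by blast
    obtain c where c: "c \<in> Poly_Mapping.keys x" "b = smul q c"
      using keys_frobenius[OF assms(3,4), of x] x ab(3) by auto
    then obtain h' I where "hibi_cone P h'" "I \<in> poset_ideals P" "c = h' + ideal_exp I"
      using keys_hibi_max[OF x(1) assms(2)] by blast
    then show ?thesis
      using ab c keys_hibi_ring[OF step(1) assms(2) ab(2)] by blast
  next
    case False
    then show ?thesis using step keys_add[of "r * s" f] by blast
  qed
qed

section \<open>Finiteness of \<open>\<nu>\<close>\<close>

lemma count_list_pigeonhole:
  assumes "set gs \<subseteq> G" "finite G" "card G * (q - 1) < length gs"
  shows "\<exists>g\<in>G. q \<le> count_list gs g"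
proof (rule ccontr)
  assume "\<not> ?thesis"
  then have "sum (count_list gs) G \<le> sum (\<lambda>_. q - 1) G" by (intro sum_mono) auto
  then show False using sum_count_set[OF assms(1,2)] assms(3) by simp
qed

lemma prod_list_extract_power:
  fixes gs :: "'r::comm_monoid_mult list"
  assumes "q \<le> count_list gs g"
  shows "\<exists>rest. set rest \<subseteq> set gs \<and> prod_list gs = g ^ q * prod_list rest"
  using assms
proof (induction gs arbitrary: q)
  case Nil
  then show ?case by (intro exI[of _ "[]"]) simp
next
  case (Cons a gs)
  show ?case
  proof (cases "a = g \<and> 0 < q")
    case True
    then have "q - 1 \<le> count_list gs g" using Cons.prems by simp
    then obtain rest where "set rest \<subseteq> set gs" "prod_list gs = g ^ (q - 1) * prod_list rest"
      using Cons.IH by blast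
    moreover have "g * g ^ (q - 1) = g ^ q" using True by (simp add: power_eq_if)
    ultimately show ?thesis using True by (intro exI[of _ rest]) (auto simp flip: mult.assoc)
  next
    case False
    then have "q \<le> count_list gs g" using Cons(2) by (auto split: if_splits)
    then obtain rest where "set rest \<subseteq> set gs" "prod_list gs = g ^ q * prod_list rest"
      using Cons.IH by blast
    then show ?thesis by (intro exI[of _ "a # rest"]) (auto simp: mult.left_commute)
  qed
qed

lemma prod_list_hibi_max:
  fixes xs :: "('a::order, 'k::field) mpoly list"
  assumes "set xs \<subseteq> hibi_max P"
  shows "prod_list xs \<in> ideal_gen (hibi_ring P)
           {prod_list gs | gs. length gs = length xs \<and> set gs \<subseteq> hibi_gens P}"
  using assms
proof (induction xs)
  case Nil
  then show ?case by (auto intro: ideal_gen_base hibi_ring_one)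
next
  case (Cons x xs)
  let ?G = "\<lambda>n. {prod_list gs | gs. length gs = n \<and> set gs \<subseteq> (hibi_gens P :: ('a, 'k) mpoly set)}"
  have "x * prod_list xs \<in> ideal_gen (hibi_ring P) {s * t | s t. s \<in> hibi_gens P \<and> t \<in> ?G (length xs)}"
    using Cons by (intro ideal_gen_mult hibi_ring.mult) (auto simp: hibi_max_def)
  moreover have "{s * t | s t. s \<in> hibi_gens P \<and> t \<in> ?G (length xs)} \<subseteq> ?G (length (x # xs))"
  proof
    fix y assume "y \<in> {s * t | s t. s \<in> hibi_gens P \<and> t \<in> ?G (length xs)}"
    then obtain s gs where "y = prod_list (s # gs)" "length (s # gs) = length (x # xs)"
        "set (s # gs) \<subseteq> hibi_gens P"
      by auto
    then show "y \<in> ?G (length (x # xs))" by blast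
  qed
  ultimately have "x * prod_list xs \<in> ideal_gen (hibi_ring P) (?G (length (x # xs)))"
    using ideal_gen_mono by blast
  then show ?case by simp
qed

lemma prod_list_hibi_gens_in_frobenius_power:
  fixes gs :: "('a::order, 'k::field) mpoly list"
  assumes "finite P" "set gs \<subseteq> hibi_gens P"
    and "card (hibi_gens P :: ('a, 'k) mpoly set) * (q - 1) < length gs"
  shows "prod_list gs \<in> frobenius_power (hibi_ring P) (hibi_max P) q"
proof -
  obtain g where g: "g \<in> hibi_gens P" "q \<le> count_list gs g"
    using count_list_pigeonhole[OF assms(2) finite_hibi_gens[OF assms(1)] assms(3)] by blast
  obtain rest where rest: "set rest \<subseteq> set gs" "prod_list gs = g ^ q * prod_list rest"
    using prod_list_extract_power[OF g(2)] by blast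
  have "prod_list rest \<in> hibi_ring P"
    using rest(1) assms(2) by (intro prod_list_hibi_ring) (auto intro: hibi_ring.gen)
  moreover have "g ^ q \<in> {x ^ q | x. x \<in> hibi_max P}" using g(1) hibi_gens_subset_hibi_max by blast
  ultimately have "prod_list rest * g ^ q + 0 \<in> frobenius_power (hibi_ring P) (hibi_max P) q"
    unfolding frobenius_power_def by (rule ideal_gen.step[OF _ _ ideal_gen.zero])
  then show ?thesis by (simp add: rest(2) mult.commute)
qed

lemma ideal_power_subset_frobenius_power:
  fixes P :: "'a::order set"
  assumes "finite P" "card (hibi_gens P :: ('a, 'k::field) mpoly set) * (q - 1) < r"
  shows "ideal_power (hibi_ring P) (hibi_max P :: ('a, 'k) mpoly set) r
           \<subseteq> frobenius_power (hibi_ring P) (hibi_max P) q"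
proof -
  let ?F = "frobenius_power (hibi_ring P) (hibi_max P :: ('a, 'k) mpoly set) q"
  let ?G = "{prod_list gs | gs. length gs = r \<and> set gs \<subseteq> (hibi_gens P :: ('a, 'k) mpoly set)}"
  let ?M = "{prod_list xs | xs. length xs = r \<and> set xs \<subseteq> (hibi_max P :: ('a, 'k) mpoly set)}"
  have "?G \<subseteq> ?F"
  proof
    fix y assume "y \<in> ?G"
    then obtain gs where "y = prod_list gs" "length gs = r" "set gs \<subseteq> hibi_gens P" by blast
    then show "y \<in> ?F" using prod_list_hibi_gens_in_frobenius_power[OF assms(1), of gs q] assms(2) by simp
  qed
  then have "ideal_gen (hibi_ring P) ?G \<subseteq> ?F"
    unfolding frobenius_power_def by (rule ideal_gen_subset_ideal_gen) (rule hibi_ring.mult)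
  moreover have "?M \<subseteq> ideal_gen (hibi_ring P) ?G"
  proof
    fix y assume "y \<in> ?M"
    then obtain xs where "y = prod_list xs" "length xs = r" "set xs \<subseteq> hibi_max P" by blast
    then show "y \<in> ideal_gen (hibi_ring P) ?G" using prod_list_hibi_max[of xs P] by simp
  qed
  ultimately have "?M \<subseteq> ?F"
    by (rule order.trans[rotated])
  then show ?thesis
    unfolding ideal_power_def frobenius_power_def
    by (rule ideal_gen_subset_ideal_gen) (rule hibi_ring.mult)
qed

lemma finite_powers_not_in_frobenius_power:
  assumes "finite P"
  shows "finite {r. \<not> ideal_power (hibi_ring P) (hibi_max P :: ('a::order, 'k::field) mpoly set) r
                      \<subseteq> frobenius_power (hibi_ring P) (hibi_max P) q}"
proof (rule finite_subset)
  let ?N = "card (hibi_gens P :: ('a, 'k) mpoly set) * (q - 1)"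
  show "{r. \<not> ideal_power (hibi_ring P) (hibi_max P :: ('a, 'k) mpoly set) r
              \<subseteq> frobenius_power (hibi_ring P) (hibi_max P) q} \<subseteq> {..?N}"
  proof
    fix r assume r: "r \<in> {r. \<not> ideal_power (hibi_ring P) (hibi_max P :: ('a, 'k) mpoly set) r
                             \<subseteq> frobenius_power (hibi_ring P) (hibi_max P) q}"
    show "r \<in> {..?N}"
    proof (rule ccontr)
      assume "r \<notin> {..?N}"
      then show False using ideal_power_subset_frobenius_power[OF assms, of q r, where 'k = 'k] r by simp
    qed
  qed
qed simp

section \<open>Paths satisfying (*)\<close>

lemma ex_last_before:
  assumes "Q (k::nat)" "k < i"
  shows "\<exists>u. k \<le> u \<and> u < i \<and> Q u \<and> (\<forall>m. u < m \<and> m < i \<longrightarrow> \<not> Q m)"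
proof -
  let ?S = "{m. k \<le> m \<and> m < i \<and> Q m}"
  have fin: "finite ?S" by (rule finite_subset[of _ "{..<i}"]) auto
  have "k \<in> ?S" using assms by simp
  then have max: "Max ?S \<in> ?S" using fin Max_in by blast
  have "\<not> Q m" if "Max ?S < m" "m < i" for m
  proof
    assume "Q m"
    then have "m \<in> ?S" using that max by simp
    from Max_ge[OF fin this] that(1) show False by simp
  qed
  then show ?thesis using max by blast
qed

lemma ex_first_from:
  assumes "Q (k::nat)" "i \<le> k"
  shows "\<exists>w. i \<le> w \<and> w \<le> k \<and> Q w \<and> (\<forall>m. i \<le> m \<and> m < w \<longrightarrow> \<not> Q m)"
proof -
  let ?w = "LEAST m. i \<le> m \<and> Q m"
  have "i \<le> ?w \<and> Q ?w" by (rule LeastI[of _ k]) (use assms in simp)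
  moreover have "?w \<le> k" using assms by (simp add: Least_le)
  moreover have "\<forall>m. i \<le> m \<and> m < ?w \<longrightarrow> \<not> Q m" using not_less_Least by blast
  ultimately show ?thesis by blast
qed

lemma card_less_nth_sorted_list_of_set:
  fixes S :: "nat set"
  assumes "finite S" "k < card S"
  shows "card {y\<in>S. y < sorted_list_of_set S ! k} = k"
proof -
  let ?L = "sorted_list_of_set S"
  have sorted: "sorted_wrt (<) ?L" by (simp add: strict_sorted_list_of_set)
  have "{y\<in>S. y < ?L ! k} = (\<lambda>i. ?L ! i) ` {..<k}"
  proof (intro set_eqI iffI)
    fix y assume y: "y \<in> {y\<in>S. y < ?L ! k}"
    then have "y \<in> set ?L" using assms(1) by simp
    then obtain i where i: "i < length ?L" "y = ?L ! i" by (auto simp: in_set_conv_nth)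
    have "i < k"
    proof (rule ccontr)
      assume "\<not> i < k"
      then have "?L ! k \<le> ?L ! i" using i(1) by (intro sorted_nth_mono) simp_all
      then show False using y i(2) by simp
    qed
    then show "y \<in> (\<lambda>i. ?L ! i) ` {..<k}" using i by auto
  next
    fix y assume "y \<in> (\<lambda>i. ?L ! i) ` {..<k}"
    then obtain i where i: "i < k" "y = ?L ! i" by auto
    have "?L ! i < ?L ! k" using sorted_wrt_nth_less[OF sorted i(1)] assms by simp
    moreover have "?L ! i \<in> set ?L" using i(1) assms by (intro nth_mem) simp
    ultimately show "y \<in> {y\<in>S. y < ?L ! k}" using i(2) assms(1) by simp
  qed
  moreover have "inj_on (\<lambda>i. ?L ! i) {..<k}"
    using assms by (intro inj_on_nth) auto
  ultimately show ?thesis by (simp add: card_image)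
qed

lemma nth_sorted_list_of_set_card_less:
  fixes S :: "nat set"
  assumes "finite S" "x \<in> S"
  shows "sorted_list_of_set S ! card {y\<in>S. y < x} = x"
proof -
  obtain k where k: "k < length (sorted_list_of_set S)" "x = sorted_list_of_set S ! k"
    using assms by (metis in_set_conv_nth set_sorted_list_of_set)
  then show ?thesis using card_less_nth_sorted_list_of_set[OF assms(1), of k] by simp
qed

lemma card_less_Suc:
  "card {y::nat. Q y \<and> y < Suc x} = card {y. Q y \<and> y < x} + (if Q x then 1 else 0)"
proof -
  have fin: "finite {y. Q y \<and> y < x}" by (rule finite_subset[of _ "{..<x}"]) auto
  show ?thesis
  proof (cases "Q x")
    case True
    then have "{y. Q y \<and> y < Suc x} = insert x {y. Q y \<and> y < x}" by auto
    then show ?thesis using True fin by simp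
  next
    case False
    then have "{y. Q y \<and> y < Suc x} = {y. Q y \<and> y < x}" using less_Suc_eq by auto
    then show ?thesis using False by simp
  qed
qed

locale star_path =
  fixes P :: "'a::order set" and xs :: "'a list"
  assumes maximal_path: "is_maximal_path P xs" and star: "star_cond P xs"
    and length_ge_2: "2 \<le> length xs"
begin

definition up :: "nat \<Rightarrow> bool" where "up i \<longleftrightarrow> covers P (xs ! i) (xs ! Suc i)"
definition down :: "nat \<Rightarrow> bool" where "down i \<longleftrightarrow> covers P (xs ! Suc i) (xs ! i)"

lemma path: "is_path P xs"
  using maximal_path by (simp add: is_maximal_path_def)

lemma nth_in_P: "i < length xs \<Longrightarrow> xs ! i \<in> P"
  using path by (auto simp: is_path_def)

lemma up_or_down: "Suc i < length xs \<Longrightarrow> up i \<or> down i"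
  using path by (auto simp: is_path_def up_def down_def)

lemma not_up_and_down: "up i \<Longrightarrow> \<not> down i"
  by (auto simp: up_def down_def covers_def)

lemma down_iff_not_up: "Suc i < length xs \<Longrightarrow> down i \<longleftrightarrow> \<not> up i"
  using up_or_down not_up_and_down by blast

lemma up_le: "up i \<Longrightarrow> xs ! i \<le> xs ! Suc i"
  by (auto simp: up_def covers_def)

lemma down_le: "down i \<Longrightarrow> xs ! Suc i \<le> xs ! i"
  by (auto simp: down_def covers_def)

lemma up_first: "up 0"
proof -
  have "hd xs = xs ! 0" using length_ge_2 by (cases xs) auto
  then have "minimal_in P (xs ! 0)" using path by (simp add: is_path_def)
  then have "\<not> down 0" by (auto simp: down_def covers_def minimal_in_def)
  then show ?thesis using up_or_down[of 0] length_ge_2 by auto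
qed

lemma up_last: "up (length xs - 2)"
  using path length_ge_2 by (simp add: is_path_def up_def Suc_diff_Suc numeral_2_eq_2)

lemma loc_max_iff:
  "loc_max P xs i \<longleftrightarrow> i = length xs - 1 \<or> (0 < i \<and> Suc i < length xs \<and> up (i - 1) \<and> down i)"
proof -
  have "0 < i \<Longrightarrow> Suc (i - 1) = i" by simp
  then show ?thesis using length_ge_2 unfolding loc_max_def up_def down_def by (cases "i = 0") auto
qed

lemma up_before_loc_max: "loc_max P xs q \<Longrightarrow> 0 < q \<and> up (q - 1)"
  using up_last length_ge_2 by (auto simp: loc_max_iff numeral_2_eq_2)

lemma loc_min_iff:
  "loc_min P xs i \<longleftrightarrow> i = 0 \<or> (0 < i \<and> Suc i < length xs \<and> down (i - 1) \<and> up i)"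
proof -
  have "0 < i \<Longrightarrow> Suc (i - 1) = i" by simp
  then show ?thesis using length_ge_2 unfolding loc_min_def up_def down_def by (cases "i = 0") auto
qed

lemma ascending_le:
  assumes "a \<le> b" "b < length xs" "\<forall>m. a \<le> m \<and> m < b \<longrightarrow> up m"
  shows "xs ! a \<le> xs ! b"
  using assms
proof (induction b)
  case (Suc b)
  show ?case
  proof (cases "a = Suc b")
    case False
    then have "xs ! a \<le> xs ! b" "up b" using Suc by auto
    then show ?thesis using up_le order_trans by blast
  qed simp
qed simp

lemma descending_le:
  assumes "a \<le> b" "b < length xs" "\<forall>m. a \<le> m \<and> m < b \<longrightarrow> down m"
  shows "xs ! b \<le> xs ! a"
  using assms
proof (induction b)
  case (Suc b)
  show ?case
  proof (cases "a = Suc b")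
    case False
    then have "xs ! b \<le> xs ! a" "down b" using Suc by auto
    then show ?thesis using down_le order_trans by blast
  qed simp
qed simp

definition peaks_before :: "nat \<Rightarrow> nat" where
  "peaks_before x = card {y. loc_max P xs y \<and> y < x}"

definition valleys_before :: "nat \<Rightarrow> nat" where
  "valleys_before x = card {y. loc_min P xs y \<and> y < x}"

lemma finite_peaks: "finite {y. loc_max P xs y}"
  by (rule finite_subset[of _ "{..<length xs}"]) (auto simp: loc_max_def)

lemma finite_valleys: "finite {y. loc_min P xs y}"
  by (rule finite_subset[of _ "{..<length xs}"]) (auto simp: loc_min_def)

lemma length_lmax_pos: "length (lmax_pos P xs) = card {y. loc_max P xs y}"
  by (simp add: lmax_pos_def)

lemma lmax_pos_nth_peaks_before: "loc_max P xs y \<Longrightarrow> lmax_pos P xs ! peaks_before y = y"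
  using nth_sorted_list_of_set_card_less[OF finite_peaks, of y]
  by (simp add: lmax_pos_def peaks_before_def)

lemma lmin_pos_nth_valleys_before: "loc_min P xs y \<Longrightarrow> lmin_pos P xs ! valleys_before y = y"
  using nth_sorted_list_of_set_card_less[OF finite_valleys, of y]
  by (simp add: lmin_pos_def valleys_before_def)

lemma loc_min_lmin_pos_nth:
  assumes "k < length (lmin_pos P xs)"
  shows "loc_min P xs (lmin_pos P xs ! k)" "valleys_before (lmin_pos P xs ! k) = k"
proof -
  have "lmin_pos P xs ! k \<in> set (lmin_pos P xs)" using assms by simp
  then show "loc_min P xs (lmin_pos P xs ! k)" using finite_valleys by (simp add: lmin_pos_def)
  show "valleys_before (lmin_pos P xs ! k) = k"
    using card_less_nth_sorted_list_of_set[OF finite_valleys, of k] assms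
    by (simp add: valleys_before_def lmin_pos_def)
qed

lemma peaks_before_less:
  assumes "loc_max P xs q" "q < y"
  shows "peaks_before q < peaks_before y"
proof -
  have "{z. loc_max P xs z \<and> z < q} \<subset> {z. loc_max P xs z \<and> z < y}" using assms by auto
  moreover have "finite {z. loc_max P xs z \<and> z < y}" by (rule finite_subset[OF _ finite_peaks]) auto
  ultimately show ?thesis unfolding peaks_before_def by (rule psubset_card_mono[rotated])
qed

lemma peaks_before_less_length: "y < length xs \<Longrightarrow> peaks_before y < length (lmax_pos P xs)"
proof -
  assume "y < length xs"
  then have "\<not> length xs - 1 < y" by linarith
  then have "length xs - 1 \<notin> {z. loc_max P xs z \<and> z < y}" by blast
  moreover have "length xs - 1 \<in> {z. loc_max P xs z}" by (simp add: loc_max_iff)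
  ultimately have "{z. loc_max P xs z \<and> z < y} \<subset> {z. loc_max P xs z}" by blast
  then show ?thesis
    unfolding peaks_before_def length_lmax_pos by (rule psubset_card_mono[OF finite_peaks])
qed

lemma valleys_before_le: "valleys_before x \<le> length (lmin_pos P xs)"
  unfolding valleys_before_def lmin_pos_def by (auto intro: card_mono[OF finite_valleys])

lemma peaks_before_Suc:
  "peaks_before (Suc x) = peaks_before x + (if loc_max P xs x then 1 else 0)"
  unfolding peaks_before_def by (rule card_less_Suc)

lemma peaks_before_eq:
  assumes "a \<le> b" "\<forall>m. a \<le> m \<and> m < b \<longrightarrow> \<not> loc_max P xs m"
  shows "peaks_before b = peaks_before a"
  using assms
proof (induction b)
  case (Suc b)
  show ?case
  proof (cases "a = Suc b")
    case False
    then show ?thesis using Suc by (simp add: peaks_before_Suc)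
  qed simp
qed simp

text \<open>Before each position, valleys and peaks alternate, starting with the valley at 0.\<close>
lemma valleys_before_eq:
  "x < length xs \<Longrightarrow> valleys_before x = peaks_before x + (if 0 < x \<and> up (x - 1) then 1 else 0)"
proof (induction x)
  case 0
  then show ?case by (simp add: valleys_before_def peaks_before_def)
next
  case (Suc x)
  have IH: "valleys_before x = peaks_before x + (if 0 < x \<and> up (x - 1) then 1 else 0)"
    using Suc by simp
  have x: "Suc x < length xs" using Suc by simp
  have V: "valleys_before (Suc x) = valleys_before x + (if loc_min P xs x then 1 else 0)"
    unfolding valleys_before_def by (rule card_less_Suc)
  have "loc_min P xs x \<longleftrightarrow> x = 0 \<or> (0 < x \<and> down (x - 1) \<and> up x)"
    using loc_min_iff x by auto
  moreover have "loc_max P xs x \<longleftrightarrow> 0 < x \<and> up (x - 1) \<and> down x"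
    using loc_max_iff x by auto
  moreover have "down x \<longleftrightarrow> \<not> up x" using down_iff_not_up[OF x] .
  moreover have "0 < x \<Longrightarrow> down (x - 1) \<longleftrightarrow> \<not> up (x - 1)" using down_iff_not_up[of "x - 1"] x by simp
  ultimately show ?case using IH V up_first peaks_before_Suc[of x] by (cases "x = 0") auto
qed

lemma in_angA_if_le_peak:
  assumes "loc_max P xs q" "z \<in> P" "z \<le> xs ! q"
  shows "z \<in> angA P xs (peaks_before q)"
  using assms lmax_pos_nth_peaks_before[OF assms(1)] by (simp add: angA_def tA_def down_set_def)

lemma star_cond_D_disjoint:
  assumes "Suc s < length (lmax_pos P xs)"
  shows "(\<lambda>j. xs ! j) ` D_pos P xs s \<inter>
           ((\<Union>l<s. angA P xs l) \<union>
            down_set P ((\<lambda>j. xs ! j) ` (A_pos P xs s - {lmax_pos P xs ! s})) \<union>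
            {tA P xs s}) = {}"
  using star assms unfolding star_cond_def by blast

lemma star_cond_A_disjoint:
  assumes "Suc s < length (lmax_pos P xs)"
  shows "(\<lambda>j. xs ! j) ` A_pos P xs (Suc s) \<inter> (\<Union>l\<le>s. angA P xs l) = {}"
  using star assms unfolding star_cond_def by blast

lemma exists_valley_before:
  assumes "0 < i" "i < length xs" "up (i - 1)"
  shows "\<exists>V<i. loc_min P xs V \<and> (\<forall>m. V \<le> m \<and> m < i \<longrightarrow> up m)"
proof -
  define V where "V = (LEAST v. \<forall>m. v \<le> m \<and> m < i \<longrightarrow> up m)"
  have last: "\<forall>m. i - 1 \<le> m \<and> m < i \<longrightarrow> up m"
  proof (intro allI impI)
    fix m assume "i - 1 \<le> m \<and> m < i"
    then have "m = i - 1" by linarith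
    then show "up m" using assms(3) by simp
  qed
  then have ups: "\<forall>m. V \<le> m \<and> m < i \<longrightarrow> up m" unfolding V_def by (rule LeastI)
  have "V \<le> i - 1" unfolding V_def using last by (rule Least_le)
  then have "V < i" using assms(1) by simp
  have "loc_min P xs V"
  proof (cases "V = 0")
    case False
    have "V - 1 < V" using False by simp
    then have "\<not> (\<forall>m. V - 1 \<le> m \<and> m < i \<longrightarrow> up m)"
      unfolding V_def by (rule not_less_Least)
    then obtain m where m: "V - 1 \<le> m" "m < i" "\<not> up m" by blast
    then have "m = V - 1" using ups by (cases "V \<le> m") auto
    then have "\<not> up (V - 1)" using m(3) by simp
    then show ?thesis
      using False ups \<open>V < i\<close> assms(2) down_iff_not_up[of "V - 1"] by (auto simp: loc_min_iff)
  qed (simp add: loc_min_iff)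
  with \<open>V < i\<close> ups show ?thesis by blast
qed

lemma exists_peak_after:
  assumes "0 < i" "i < length xs" "up (i - 1)"
  shows "\<exists>Pk. i \<le> Pk \<and> loc_max P xs Pk \<and> (\<forall>m. i \<le> m \<and> m < Pk \<longrightarrow> up m)"
proof -
  have "i \<le> length xs - 1" using assms(2) by simp
  then obtain Pk where Pk: "i \<le> Pk" "Pk \<le> length xs - 1" "Pk = length xs - 1 \<or> \<not> up Pk"
    and "\<forall>m. i \<le> m \<and> m < Pk \<longrightarrow> \<not> (m = length xs - 1 \<or> \<not> up m)"
    using ex_first_from[of "\<lambda>p. p = length xs - 1 \<or> \<not> up p" "length xs - 1" i] by blast
  then have before: "\<forall>m. i \<le> m \<and> m < Pk \<longrightarrow> up m" by blast
  have "loc_max P xs Pk"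
  proof (cases "Pk = length xs - 1")
    case False
    then have "down Pk" using Pk down_iff_not_up[of Pk] by auto
    moreover have "up (Pk - 1)" using assms(3) before Pk(1) by (cases "Pk = i") auto
    ultimately show ?thesis using False Pk assms(1) by (auto simp: loc_max_iff)
  qed (simp add: loc_max_iff)
  then show ?thesis using Pk(1) before by blast
qed

lemma exists_peak_before:
  assumes "up k" "k < i" "i < length xs" "down (i - 1)"
  shows "\<exists>Pk. k < Pk \<and> Pk < i \<and> loc_max P xs Pk \<and> (\<forall>m. Pk \<le> m \<and> m < i \<longrightarrow> down m)"
proof -
  obtain u where u: "k \<le> u" "u < i" "up u" "\<forall>m. u < m \<and> m < i \<longrightarrow> \<not> up m"
    using ex_last_before[of up k i] assms(1,2) by blast
  have "u \<noteq> i - 1" using u(3) assms(4) not_up_and_down by blast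
  then have "Suc u < i" using u(2) by linarith
  have downs: "\<forall>m. Suc u \<le> m \<and> m < i \<longrightarrow> down m"
    using u(4) assms(3) down_iff_not_up by auto
  then have "loc_max P xs (Suc u)"
    using \<open>Suc u < i\<close> u(3) assms(3) by (auto simp: loc_max_iff)
  then show ?thesis using \<open>Suc u < i\<close> u(1) downs by (intro exI[of _ "Suc u"]) auto
qed

lemma exists_valley_after:
  assumes "0 < i" "i < length xs" "down (i - 1)"
  shows "\<exists>w. i \<le> w \<and> loc_min P xs w \<and> (\<forall>m. i \<le> m \<and> m < w \<longrightarrow> down m)"
proof -
  have "i - 1 \<noteq> length xs - 2" using up_last assms(3) not_up_and_down by metis
  then have "i \<le> length xs - 2" using assms(1,2) by linarith
  then obtain w where w: "i \<le> w" "w \<le> length xs - 2" "up w" "\<forall>m. i \<le> m \<and> m < w \<longrightarrow> \<not> up m"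
    using ex_first_from[of up "length xs - 2" i] up_last by blast
  have downs: "\<forall>m. i \<le> m \<and> m < w \<longrightarrow> down m"
    using w(2,4) length_ge_2 down_iff_not_up by auto
  have "down (w - 1)" using assms(3) downs w(1) by (cases "w = i") auto
  then have "loc_min P xs w" using w(1-3) assms(1) length_ge_2 by (auto simp: loc_min_iff)
  then show ?thesis using w(1) downs by blast
qed

text \<open>Climb to the end of the ascent through \<open>j\<close>, or go back to the peak of the descent
  through \<open>j\<close>.\<close>
lemma exists_peak_above:
  assumes "j \<le> V" "V < length xs" "0 < V" "down (V - 1)"
  shows "\<exists>Q. loc_max P xs Q \<and> Q < V \<and> xs ! j \<le> xs ! Q"
proof (cases "j < V \<and> up j")
  case True
  have "\<not> up (V - 1)" "j \<le> V - 1" using assms(4) not_up_and_down True by auto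
  then obtain c where c: "j \<le> c" "c \<le> V - 1" "\<not> up c" "\<forall>m. j \<le> m \<and> m < c \<longrightarrow> \<not> \<not> up m"
    using ex_first_from[of "\<lambda>m. \<not> up m" "V - 1" j] by blast
  have "j < c" using c(1,3) True by (cases "j = c") auto
  have "loc_max P xs c"
    using c \<open>j < c\<close> assms(2) down_iff_not_up[of c] by (auto simp: loc_max_iff)
  moreover have "xs ! j \<le> xs ! c" using c assms(2) by (intro ascending_le) auto
  ultimately show ?thesis using c(2) assms(3) by (intro exI[of _ c]) auto
next
  case False
  note not_ascending = False
  have "0 < j" using False up_first assms(1,3) by (cases j) auto
  then obtain u where u: "u < j" "up u" "\<forall>m. u < m \<and> m < j \<longrightarrow> \<not> up m"
    using ex_last_before[of up 0 j] up_first by auto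
  have "Suc u \<noteq> V" using u(2) assms(4) not_up_and_down by auto
  then have "Suc u < V" using u(1) assms(1) by simp
  have "\<not> up (Suc u)"
  proof (cases "Suc u = j")
    case True
    then show ?thesis using not_ascending \<open>Suc u < V\<close> by auto
  next
    case False
    then show ?thesis using u(1,3) by simp
  qed
  then have "loc_max P xs (Suc u)"
    using u(2) \<open>Suc u < V\<close> assms(2) down_iff_not_up[of "Suc u"] by (auto simp: loc_max_iff)
  moreover have "xs ! j \<le> xs ! Suc u"
    using u assms(1,2) down_iff_not_up by (intro descending_le) auto
  ultimately show ?thesis using \<open>Suc u < V\<close> by blast
qed

lemma ascent_block:
  assumes "loc_min P xs V" "loc_max P xs Pk" "V < Pk" "\<forall>m. V \<le> m \<and> m < Pk \<longrightarrow> up m"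
  shows "peaks_before V = peaks_before Pk" "{V<..Pk} \<subseteq> A_pos P xs (peaks_before Pk)"
proof -
  have "Pk < length xs" using assms(2) by (simp add: loc_max_def)
  have "\<not> loc_max P xs m" if "V \<le> m" "m < Pk" for m
    using that assms(4) \<open>Pk < length xs\<close> not_up_and_down by (auto simp: loc_max_iff)
  then show pb: "peaks_before V = peaks_before Pk"
    using assms(3) by (intro peaks_before_eq[symmetric]) auto
  have "valleys_before V = peaks_before V"
    using valleys_before_eq[of V] assms(1,3) \<open>Pk < length xs\<close> not_up_and_down
    by (auto simp: loc_min_iff)
  then have "lmin_pos P xs ! peaks_before Pk = V"
    using lmin_pos_nth_valleys_before[OF assms(1)] pb by simp
  then show "{V<..Pk} \<subseteq> A_pos P xs (peaks_before Pk)"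
    using lmax_pos_nth_peaks_before[OF assms(2)] by (auto simp: A_pos_def)
qed

lemma descent_block:
  assumes "loc_max P xs Pk" "loc_min P xs w" "Pk < w" "\<forall>m. Pk \<le> m \<and> m < w \<longrightarrow> down m"
  shows "Suc (peaks_before Pk) < length (lmax_pos P xs)"
    "{Pk<..w} \<subseteq> D_pos P xs (peaks_before Pk)"
proof -
  have w: "Suc w < length xs" "down (w - 1)"
    using assms(2,3) by (auto simp: loc_min_iff)
  have "\<not> loc_max P xs m" if "Suc Pk \<le> m" "m < w" for m
  proof
    assume "loc_max P xs m"
    have "Pk \<le> m - 1" "m - 1 < w" using that by auto
    then have "down (m - 1)" using assms(4) by blast
    then have "\<not> up (m - 1)" using not_up_and_down by blast
    moreover have "m \<noteq> length xs - 1" using that w by simp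
    ultimately show False using \<open>loc_max P xs m\<close> by (simp add: loc_max_iff)
  qed
  then have "peaks_before w = peaks_before (Suc Pk)"
    using assms(3) by (intro peaks_before_eq) auto
  then have pb: "peaks_before w = Suc (peaks_before Pk)"
    using assms(1) by (simp add: peaks_before_Suc)
  then show "Suc (peaks_before Pk) < length (lmax_pos P xs)"
    using peaks_before_less_length[of w] w by simp
  have "valleys_before w = peaks_before w"
    using valleys_before_eq[of w] w not_up_and_down by auto
  then have "lmin_pos P xs ! Suc (peaks_before Pk) = w"
    using lmin_pos_nth_valleys_before[OF assms(2)] pb by simp
  then show "{Pk<..w} \<subseteq> D_pos P xs (peaks_before Pk)"
    using lmax_pos_nth_peaks_before[OF assms(1)] by (auto simp: D_pos_def)
qed

lemma no_drop_at_ascent: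
  assumes "j < i" "i < length xs" "up (i - 1)"
  shows "\<not> xs ! i < xs ! j"
proof
  assume drop: "xs ! i < xs ! j"
  have "0 < i" using assms(1) by simp
  obtain V where V: "V < i" "loc_min P xs V" "\<forall>m. V \<le> m \<and> m < i \<longrightarrow> up m"
    using exists_valley_before[OF \<open>0 < i\<close> assms(2,3)] by blast
  obtain Pk where Pk: "i \<le> Pk" "loc_max P xs Pk" "\<forall>m. i \<le> m \<and> m < Pk \<longrightarrow> up m"
    using exists_peak_after[OF \<open>0 < i\<close> assms(2,3)] by blast
  have "V < Pk" using V(1) Pk(1) by simp
  moreover have "\<forall>m. V \<le> m \<and> m < Pk \<longrightarrow> up m" using V(3) Pk(3) by (meson not_le)
  ultimately have block: "peaks_before V = peaks_before Pk" "{V<..Pk} \<subseteq> A_pos P xs (peaks_before Pk)"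
    using ascent_block[OF V(2) Pk(2)] by blast+
  define s where "s = peaks_before Pk"
  have xi_A: "xs ! i \<in> (\<lambda>j. xs ! j) ` A_pos P xs s"
    using block(2) V(1) Pk(1) unfolding s_def by auto
  show False
  proof (cases "V \<le> j")
    case True
    then have "xs ! j \<le> xs ! i" using V(3) assms(1,2) by (intro ascending_le) auto
    then show False using drop by simp
  next
    case False
    then have "0 < V" "down (V - 1)" using V(2) by (auto simp: loc_min_iff)
    then obtain Q where Q: "loc_max P xs Q" "Q < V" "xs ! j \<le> xs ! Q"
      using exists_peak_above[of j V] False V(1) assms(2) by auto
    have "peaks_before Q < s" using peaks_before_less[OF Q(1,2)] block(1) V(1) Pk(1) s_def by simp
    moreover have "xs ! i \<in> angA P xs (peaks_before Q)"
      using in_angA_if_le_peak[OF Q(1) nth_in_P[OF assms(2)]] drop Q(3) by simp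
    moreover have "Suc (s - 1) < length (lmax_pos P xs)"
      using peaks_before_less_length[of Pk] Pk(2) \<open>peaks_before Q < s\<close> s_def
      by (simp add: loc_max_def)
    ultimately show False using star_cond_A_disjoint[of "s - 1"] xi_A by fastforce
  qed
qed

lemma no_drop_at_descent:
  assumes "j \<le> k" "k < i" "up k" "i < length xs" "down (i - 1)"
  shows "\<not> xs ! i < xs ! j"
proof
  assume drop: "xs ! i < xs ! j"
  have "0 < i" using assms(2) by simp
  obtain Pk where Pk: "k < Pk" "Pk < i" "loc_max P xs Pk" "\<forall>m. Pk \<le> m \<and> m < i \<longrightarrow> down m"
    using exists_peak_before[OF assms(3,2,4,5)] by blast
  obtain w where w: "i \<le> w" "loc_min P xs w" "\<forall>m. i \<le> m \<and> m < w \<longrightarrow> down m"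
    using exists_valley_after[OF \<open>0 < i\<close> assms(4,5)] by blast
  have "Pk < w" using Pk(2) w(1) by simp
  moreover have "\<forall>m. Pk \<le> m \<and> m < w \<longrightarrow> down m" using Pk(4) w(3) by (meson not_le)
  ultimately have block: "Suc (peaks_before Pk) < length (lmax_pos P xs)"
      "{Pk<..w} \<subseteq> D_pos P xs (peaks_before Pk)"
    using descent_block[OF Pk(3) w(2)] by blast+
  define s where "s = peaks_before Pk"
  have xi_D: "xs ! i \<in> (\<lambda>j. xs ! j) ` D_pos P xs s"
    using block(2) Pk(2) w(1) unfolding s_def by auto
  have "xs ! i \<in> (\<Union>l<s. angA P xs l) \<union>
          down_set P ((\<lambda>j. xs ! j) ` (A_pos P xs s - {lmax_pos P xs ! s}))"
  proof (cases "s = 0 \<or> lmin_pos P xs ! s < j")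
    case True
    then have "j \<in> A_pos P xs s - {lmax_pos P xs ! s}"
      using lmax_pos_nth_peaks_before[OF Pk(3)] Pk(1) assms(1) s_def by (auto simp: A_pos_def)
    then show ?thesis
      using nth_in_P[OF assms(4)] drop unfolding down_set_def by (auto intro: less_imp_le)
  next
    case False
    define V where "V = lmin_pos P xs ! s"
    have "valleys_before Pk = Suc s"
      using valleys_before_eq[of Pk] up_before_loc_max[OF Pk(3)] Pk(2) assms(4) s_def by simp
    then have "s < length (lmin_pos P xs)" using valleys_before_le[of Pk] by simp
    then have V: "loc_min P xs V" "valleys_before V = s"
      using loc_min_lmin_pos_nth unfolding V_def by blast+
    have "0 < V" using V(2) False by (cases V) (auto simp: valleys_before_def)
    then have "down (V - 1)" "V < length xs" using V(1) by (auto simp: loc_min_iff)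
    then have "peaks_before V = s"
      using valleys_before_eq[of V] V(2) not_up_and_down by auto
    obtain Q where Q: "loc_max P xs Q" "Q < V" "xs ! j \<le> xs ! Q"
      using exists_peak_above[of j V] False \<open>0 < V\<close> \<open>down (V - 1)\<close> \<open>V < length xs\<close>
      unfolding V_def by auto
    have "peaks_before Q < s" using peaks_before_less[OF Q(1,2)] \<open>peaks_before V = s\<close> by simp
    moreover have "xs ! i \<in> angA P xs (peaks_before Q)"
      using in_angA_if_le_peak[OF Q(1) nth_in_P[OF assms(4)]] drop Q(3) by simp
    ultimately show ?thesis by blast
  qed
  then show False using star_cond_D_disjoint[OF block(1)] xi_D unfolding s_def by blast
qed

text \<open>Condition (*) is used only through this lemma; it makes \<open>path_weight\<close> drop by exactly one
  along every up-step.\<close>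
lemma no_up_across_drop:
  assumes "j \<le> k" "k < i" "i < length xs" "xs ! i < xs ! j"
  shows "\<not> up k"
proof
  assume "up k"
  have "Suc (i - 1) < length xs" using assms(2,3) by simp
  then consider "up (i - 1)" | "down (i - 1)" using up_or_down by blast
  then show False
    using no_drop_at_ascent[of j i] no_drop_at_descent[OF assms(1,2) \<open>up k\<close> assms(3)] assms
    by cases auto
qed

end

section \<open>A weight function along a path\<close>

definition ups_before :: "'a::order set \<Rightarrow> 'a list \<Rightarrow> nat \<Rightarrow> nat" where
  "ups_before P xs j = card {i. i < j \<and> Suc i < length xs \<and> covers P (xs ! i) (xs ! Suc i)}"

text \<open>One more than the number of up-steps of the path from the first position lying
  above \<open>p\<close> on (and \<open>1\<close> if there is none).\<close>
definition path_weight :: "'a::order set \<Rightarrow> 'a list \<Rightarrow> 'a \<Rightarrow> nat" where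
  "path_weight P xs p =
     Max ({1} \<union> {len_star P xs + 1 - ups_before P xs j | j. j < length xs \<and> p \<le> xs ! j})"

lemma ups_before_mono: "j \<le> j' \<Longrightarrow> ups_before P xs j \<le> ups_before P xs j'"
  unfolding ups_before_def by (rule card_mono) (auto intro: finite_subset[of _ "{..<j'}"])

lemma ups_before_le_len_star: "ups_before P xs j \<le> len_star P xs"
  unfolding ups_before_def len_star_def
  by (rule card_mono) (auto intro: finite_subset[of _ "{..<length xs}"])

lemma ups_before_0: "ups_before P xs 0 = 0"
  by (simp add: ups_before_def)

lemma ups_before_last: "ups_before P xs (length xs - 1) = len_star P xs"
  unfolding ups_before_def len_star_def by (rule arg_cong[where f = card]) auto

lemma ups_before_Suc:
  assumes "Suc i < length xs" "covers P (xs ! i) (xs ! Suc i)"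
  shows "ups_before P xs (Suc i) = Suc (ups_before P xs i)"
proof -
  have "card {y. (Suc y < length xs \<and> covers P (xs ! y) (xs ! Suc y)) \<and> y < Suc i} =
    card {y. (Suc y < length xs \<and> covers P (xs ! y) (xs ! Suc y)) \<and> y < i} + 1"
    using card_less_Suc[where Q = "\<lambda>y. Suc y < length xs \<and> covers P (xs ! y) (xs ! Suc y)"] assms
    by simp
  then show ?thesis unfolding ups_before_def by (simp add: conj_commute conj_left_commute)
qed

lemma ups_before_eq_across_drop:
  assumes "is_maximal_path P xs" "star_cond P xs"
    and "j < i" "i < length xs" "xs ! i < xs ! j"
  shows "ups_before P xs i = ups_before P xs j"
proof -
  have "2 \<le> length xs" using assms(3,4) by linarith
  with assms(1,2) interpret star_path P xs by unfold_locales
  have "{m. m < i \<and> Suc m < length xs \<and> covers P (xs ! m) (xs ! Suc m)} =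
    {m. m < j \<and> Suc m < length xs \<and> covers P (xs ! m) (xs ! Suc m)}"
    using no_up_across_drop[of j _ i] assms(3-5) by (auto simp: up_def not_le) (meson not_le)
  then show ?thesis unfolding ups_before_def by simp
qed

lemma finite_path_weight_set:
  "finite ({1} \<union> {len_star P xs + 1 - ups_before P xs j | j. j < length xs \<and> p \<le> xs ! j})"
proof -
  have "{len_star P xs + 1 - ups_before P xs j | j. j < length xs \<and> p \<le> xs ! j} \<subseteq>
      (\<lambda>j. len_star P xs + 1 - ups_before P xs j) ` {..<length xs}" by auto
  then show ?thesis by (auto intro: finite_subset)
qed

lemma path_weight_ge: "j < length xs \<Longrightarrow> p \<le> xs ! j \<Longrightarrow> len_star P xs + 1 - ups_before P xs j \<le> path_weight P xs p"
  unfolding path_weight_def by (rule Max_ge[OF finite_path_weight_set]) blast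

lemma path_weight_le: "path_weight P xs p \<le> len_star P xs + 1"
  unfolding path_weight_def using finite_path_weight_set by (subst Max_le_iff) auto

lemma path_weight_antimono: "p \<le> p' \<Longrightarrow> path_weight P xs p' \<le> path_weight P xs p"
  unfolding path_weight_def by (rule Max_mono[OF _ _ finite_path_weight_set]) (auto intro: order_trans)

lemma path_weight_nth:
  assumes "is_maximal_path P xs" "star_cond P xs" "i < length xs"
  shows "path_weight P xs (xs ! i) = len_star P xs + 1 - ups_before P xs i"
proof (rule antisym)
  have distinct: "distinct xs" using assms(1) by (simp add: is_maximal_path_def is_path_def)
  show "path_weight P xs (xs ! i) \<le> len_star P xs + 1 - ups_before P xs i"
    unfolding path_weight_def
  proof (rule Max.boundedI[OF finite_path_weight_set], blast)
    fix a assume "a \<in> {1} \<union> {len_star P xs + 1 - ups_before P xs j | j. j < length xs \<and> xs ! i \<le> xs ! j}"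
    then consider "a = 1"
      | j where "a = len_star P xs + 1 - ups_before P xs j" "j < length xs" "xs ! i \<le> xs ! j"
      by blast
    then show "a \<le> len_star P xs + 1 - ups_before P xs i"
    proof cases
      case 1
      then show ?thesis using ups_before_le_len_star[of P xs i] by simp
    next
      case (2 j)
      show ?thesis
      proof (cases "i \<le> j")
        case True
        then show ?thesis using ups_before_mono[OF True, of P xs] 2(1) by simp
      next
        case False
        then have "xs ! i < xs ! j"
          using 2(2,3) assms(3) distinct by (auto simp: order.strict_iff_order nth_eq_iff_index_eq)
        then have "ups_before P xs i = ups_before P xs j"
          using ups_before_eq_across_drop[OF assms(1,2)] False assms(3) by simp
        then show ?thesis using 2(1) by simp
      qed
    qed
  qed
  show "len_star P xs + 1 - ups_before P xs i \<le> path_weight P xs (xs ! i)"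
    using path_weight_ge[OF assms(3)] by simp
qed

section \<open>The witness monomial\<close>

definition weight_ideal :: "'a::order set \<Rightarrow> 'a list \<Rightarrow> nat \<Rightarrow> 'a set" where
  "weight_ideal P xs j = {p \<in> P. j \<le> path_weight P xs p}"

definition witness_ideals :: "'a::order set \<Rightarrow> 'a list \<Rightarrow> nat \<Rightarrow> 'a set list" where
  "witness_ideals P xs q =
     concat (map (\<lambda>j. replicate (q - 1) (weight_ideal P xs j)) [1..<len_star P xs + 3])"

definition witness_exp :: "'a::order set \<Rightarrow> 'a list \<Rightarrow> nat \<Rightarrow> ('a option \<Rightarrow>\<^sub>0 nat)" where
  "witness_exp P xs q = sum_list (map ideal_exp (witness_ideals P xs q))"

lemma weight_ideal_in_poset_ideals: "weight_ideal P xs j \<in> poset_ideals P"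
  unfolding weight_ideal_def poset_ideals_def using path_weight_antimono order_trans by blast

lemma length_witness_ideals: "length (witness_ideals P xs q) = (len_star P xs + 2) * (q - 1)"
  by (simp add: witness_ideals_def length_concat comp_def sum_list_triv)

lemma set_witness_ideals: "set (witness_ideals P xs q) \<subseteq> range (weight_ideal P xs)"
  by (auto simp: witness_ideals_def)

lemma sum_list_concat: "sum_list (concat xss) = sum_list (map sum_list (xss :: 'a::monoid_add list list))"
  by (induction xss) simp_all

lemma lookup_sum_list:
  "Poly_Mapping.lookup (sum_list xs) k = sum_list (map (\<lambda>x. Poly_Mapping.lookup x k) xs)"
  by (induction xs) (simp_all add: lookup_add)

lemma sum_list_upt_indicator:
  assumes "f \<le> u + 1"
  shows "sum_list (map (\<lambda>j. (c::nat) * (if j \<le> f then 1 else 0)) [1..<u + 3]) = c * f"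
proof -
  have "sum_list (map (\<lambda>j. c * (if j \<le> f then 1 else 0)) [1..<u + 3]) =
      (\<Sum>j\<in>{1..<u + 3}. c * (if j \<le> f then 1 else 0))"
    by (simp add: sum_list_distinct_conv_sum_set)
  also have "\<dots> = (\<Sum>j\<in>{1..<u + 3}. if j \<le> f then c else 0)" by (intro sum.cong) auto
  also have "\<dots> = (\<Sum>j\<in>{1..<u + 3} \<inter> {j. j \<le> f}. c)" by (simp add: sum.If_cases)
  also have "{1..<u + 3} \<inter> {j. j \<le> f} = {1..f}" using assms by auto
  finally show ?thesis by simp
qed

lemma lookup_witness_exp_None:
  "Poly_Mapping.lookup (witness_exp P xs q) None = (len_star P xs + 2) * (q - 1)"
  unfolding witness_exp_def lookup_sum_list
  by (simp add: comp_def lookup_ideal_exp_None sum_list_triv length_witness_ideals)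

lemma lookup_witness_exp_Some:
  assumes "finite P" "p \<in> P"
  shows "Poly_Mapping.lookup (witness_exp P xs q) (Some p) = (q - 1) * path_weight P xs p"
proof -
  have "finite (weight_ideal P xs j)" for j using assms(1) by (simp add: weight_ideal_def)
  then have "Poly_Mapping.lookup (witness_exp P xs q) (Some p) =
      sum_list (map (\<lambda>I. if p \<in> I then 1 else 0) (witness_ideals P xs q))"
    unfolding witness_exp_def lookup_sum_list map_map comp_def
    using set_witness_ideals[of P xs q] by (intro arg_cong[where f = sum_list] map_cong)
      (auto simp: lookup_ideal_exp_Some)
  also have "\<dots> = sum_list (map (\<lambda>j. (q - 1) * (if j \<le> path_weight P xs p then 1 else 0))
                                [1..<len_star P xs + 3])"
    using assms(2) by (simp add: witness_ideals_def map_concat sum_list_concat comp_def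
        weight_ideal_def sum_list_replicate)
  also have "\<dots> = (q - 1) * path_weight P xs p"
    by (rule sum_list_upt_indicator[OF path_weight_le])
  finally show ?thesis .
qed

lemma prod_list_hibi_gen:
  "prod_list (map hibi_gen Is) =
     (Poly_Mapping.single (sum_list (map ideal_exp Is)) 1 :: ('a, 'k::comm_ring_1) mpoly)"
  by (induction Is) (simp_all add: hibi_gen_eq_single mult_single)

lemma smul_add: "smul q (a + b) = smul q a + smul q b"
  by (rule poly_mapping_eqI) (simp add: lookup_smul lookup_add algebra_simps)

lemma exists_up_step_leaving_ideal:
  assumes "is_path P xs" "I \<in> poset_ideals P" "xs ! 0 \<in> I" "last xs \<notin> I"
  shows "\<exists>i. Suc i < length xs \<and> xs ! i \<in> I \<and> xs ! Suc i \<notin> I \<and> covers P (xs ! i) (xs ! Suc i)"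
proof -
  have "xs \<noteq> []" using assms(1) by (simp add: is_path_def)
  then have "xs ! (length xs - 1) \<notin> I" using assms(4) by (simp add: last_conv_nth)
  then obtain m where m: "m \<le> length xs - 1" "xs ! m \<notin> I" "\<forall>j. 0 \<le> j \<and> j < m \<longrightarrow> \<not> xs ! j \<notin> I"
    using ex_first_from[of "\<lambda>j. xs ! j \<notin> I" "length xs - 1" 0] by blast
  have "0 < m" using m(2) assms(3) by (cases m) auto
  define i where "i = m - 1"
  have i: "Suc i < length xs" "xs ! i \<in> I" "xs ! Suc i \<notin> I"
    using m \<open>0 < m\<close> \<open>xs \<noteq> []\<close> unfolding i_def by auto
  have "covers P (xs ! i) (xs ! Suc i) \<or> covers P (xs ! Suc i) (xs ! i)"
    using assms(1) i(1) by (simp add: is_path_def)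
  moreover have "\<not> covers P (xs ! Suc i) (xs ! i)"
    using i(2,3) assms(2) by (auto simp: covers_def poset_ideals_def)
  ultimately show ?thesis using i by blast
qed

text \<open>Compare the exponents of \<open>T\<close> and \<open>X\<^bsub>q\<^sub>1\<^esub>\<close>, of the last element, or of the two ends of an
  up-step leaving \<open>I\<close>.\<close>
lemma witness_exp_not_shifted_cone:
  assumes "finite P" "is_maximal_path P xs" "star_cond P xs" "0 < q"
    and "hibi_cone P z" "I \<in> poset_ideals P"
  shows "witness_exp P xs q \<noteq> z + smul q (ideal_exp I)"
proof
  assume W: "witness_exp P xs q = z + smul q (ideal_exp I)"
  have path: "is_path P xs" using assms(2) by (simp add: is_maximal_path_def)
  then have "xs \<noteq> []" and inP: "\<And>i. i < length xs \<Longrightarrow> xs ! i \<in> P"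
    by (auto simp: is_path_def)
  have "finite I" using assms(1,6) by (auto simp: poset_ideals_def intro: finite_subset)
  let ?u = "len_star P xs"
  let ?z = "\<lambda>i. Poly_Mapping.lookup z (Some (xs ! i))"
  have z_None: "Poly_Mapping.lookup z None + q = (?u + 2) * (q - 1)"
    using arg_cong[OF W, of "\<lambda>v. Poly_Mapping.lookup v None"]
    by (simp add: lookup_witness_exp_None lookup_add lookup_smul lookup_ideal_exp_None)
  have z_nth: "?z i + q * (if xs ! i \<in> I then 1 else 0) = (q - 1) * (?u + 1 - ups_before P xs i)"
    if "i < length xs" for i
    using arg_cong[OF W, of "\<lambda>v. Poly_Mapping.lookup v (Some (xs ! i))"] that
    by (simp add: lookup_witness_exp_Some[OF assms(1) inP] path_weight_nth[OF assms(2,3)]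
        lookup_add lookup_smul lookup_ideal_exp_Some[OF \<open>finite I\<close>])
  consider "xs ! 0 \<notin> I" | "last xs \<in> I" | "xs ! 0 \<in> I" "last xs \<notin> I" by blast
  then show False
  proof cases
    case 1
    have "?z 0 \<le> Poly_Mapping.lookup z None"
      using assms(5) inP[of 0] \<open>xs \<noteq> []\<close> by (simp add: hibi_cone_def)
    then show False using z_nth[of 0] z_None 1 \<open>xs \<noteq> []\<close> assms(4)
      by (simp add: ups_before_0 algebra_simps)
  next
    case 2
    then show False
      using z_nth[of "length xs - 1"] ups_before_last[of P xs] \<open>xs \<noteq> []\<close> assms(4)
      by (simp add: last_conv_nth)
  next
    case 3
    then obtain i where i: "Suc i < length xs" "xs ! i \<in> I" "xs ! Suc i \<notin> I"
        "covers P (xs ! i) (xs ! Suc i)"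
      using exists_up_step_leaving_ideal[OF path assms(6)] by blast
    have "?z (Suc i) \<le> ?z i"
      using assms(5) inP i(1,4) by (auto simp: hibi_cone_def covers_def)
    moreover have "ups_before P xs (Suc i) = Suc (ups_before P xs i)"
      using ups_before_Suc[OF i(1,4)] .
    moreover have "ups_before P xs (Suc i) \<le> ?u" by (rule ups_before_le_len_star)
    ultimately show False
      using z_nth[of i] z_nth[of "Suc i"] i(1-3) assms(4) by (auto simp: algebra_simps diff_mult_distrib2)
  qed
qed

lemma hibi_nu_ge_path:
  fixes P :: "'a::order set"
  assumes "finite P" "is_maximal_path P xs" "star_cond P xs"
    and "prime CHAR('k::field)" "q = CHAR('k) ^ e"
  shows "(len_star P xs + 2) * (q - 1) \<le> hibi_nu TYPE('k) P q"
proof -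
  let ?n = "(len_star P xs + 2) * (q - 1)"
  let ?gs = "map hibi_gen (witness_ideals P xs q) :: ('a, 'k) mpoly list"
  have w: "prod_list ?gs = Poly_Mapping.single (witness_exp P xs q) 1"
    by (simp add: prod_list_hibi_gen witness_exp_def)
  have "set (witness_ideals P xs q) \<subseteq> poset_ideals P"
    using set_witness_ideals[of P xs q] weight_ideal_in_poset_ideals by blast
  then have "set ?gs \<subseteq> hibi_gens P" by (auto simp: hibi_gens_def)
  then have "set ?gs \<subseteq> hibi_max P" using hibi_gens_subset_hibi_max by blast
  then have "prod_list ?gs \<in> {prod_list ys | ys. length ys = ?n \<and> set ys \<subseteq> hibi_max P}"
    using length_witness_ideals[of P xs q] by (intro CollectI exI[of _ ?gs]) simp
  then have "prod_list ?gs \<in> ideal_power (hibi_ring P) (hibi_max P) ?n"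
    unfolding ideal_power_def by (rule ideal_gen_base[OF _ hibi_ring_one])
  moreover have "prod_list ?gs \<notin> frobenius_power (hibi_ring P) (hibi_max P) q"
  proof
    assume "prod_list ?gs \<in> frobenius_power (hibi_ring P) (hibi_max P) q"
    then obtain h h' I where h: "hibi_cone P h" "hibi_cone P h'" and I: "I \<in> poset_ideals P"
        and eq: "witness_exp P xs q = h + smul q (h' + ideal_exp I)"
      using keys_frobenius_power[OF _ assms(1,4,5)] w by fastforce
    have "0 < q" using assms(4,5) by (simp add: prime_gt_0_nat)
    from witness_exp_not_shifted_cone[OF assms(1-3) this hibi_cone_add[OF h(1) hibi_cone_smul[OF h(2), of q]] I]
    show False using eq by (simp add: smul_add add.assoc)
  qed
  ultimately have "?n \<in> {r. \<not> ideal_power (hibi_ring P) (hibi_max P :: ('a, 'k) mpoly set) r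
                             \<subseteq> frobenius_power (hibi_ring P) (hibi_max P) q}"
    by blast
  then show ?thesis
    unfolding hibi_nu_def by (rule Max_ge[OF finite_powers_not_in_frobenius_power[OF assms(1)]])
qed

section \<open>Existence of paths satisfying (*)\<close>

definition up_chains :: "'a::order set \<Rightarrow> 'a list set" where
  "up_chains P = {ys. ys \<noteq> [] \<and> distinct ys \<and> set ys \<subseteq> P \<and> minimal_in P (hd ys) \<and>
     (\<forall>i. Suc i < length ys \<longrightarrow> covers P (ys ! i) (ys ! Suc i))}"

lemma up_chain_le_last:
  assumes "ys \<in> up_chains P" "i < length ys"
  shows "ys ! i \<le> last ys"
proof -
  have "ys ! i \<le> ys ! j" if "i \<le> j" "j < length ys" for j
    using that
  proof (induction j)
    case (Suc j)
    show ?case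
    proof (cases "i = Suc j")
      case False
      then have "ys ! i \<le> ys ! j" using Suc by simp
      moreover have "covers P (ys ! j) (ys ! Suc j)" using assms(1) Suc(3) by (simp add: up_chains_def)
      ultimately show ?thesis by (auto simp: covers_def)
    qed simp
  qed simp
  then show ?thesis using assms by (simp add: last_conv_nth up_chains_def)
qed

lemma up_chain_snoc:
  assumes "ys \<in> up_chains P" "covers P (last ys) c"
  shows "ys @ [c] \<in> up_chains P"
proof -
  have "c \<notin> set ys"
  proof
    assume "c \<in> set ys"
    then obtain i where "i < length ys" "ys ! i = c" by (auto simp: in_set_conv_nth)
    then have "c \<le> last ys" using up_chain_le_last[OF assms(1)] by blast
    then show False using assms(2) by (auto simp: covers_def)
  qed
  moreover have "covers P ((ys @ [c]) ! i) ((ys @ [c]) ! Suc i)" if "Suc i < length (ys @ [c])" for i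
  proof (cases "Suc i < length ys")
    case True
    then show ?thesis using assms(1) by (simp add: up_chains_def nth_append)
  next
    case False
    then have "i = length ys - 1" "ys \<noteq> []" using that assms(1) by (auto simp: up_chains_def)
    then show ?thesis using assms(2) by (simp add: nth_append last_conv_nth)
  qed
  ultimately show ?thesis using assms by (auto simp: up_chains_def covers_def)
qed

lemma up_chain_star_path:
  assumes "ys \<in> up_chains P" "maximal_in P (last ys)"
  shows "is_maximal_path P ys" "star_cond P ys"
proof -
  have steps: "\<And>i. Suc i < length ys \<Longrightarrow> covers P (ys ! i) (ys ! Suc i)"
    using assms(1) by (simp add: up_chains_def)
  have "covers P (ys ! (length ys - 2)) (ys ! (length ys - 1))" if "2 \<le> length ys"
    using steps[of "length ys - 2"] that by (simp add: Suc_diff_Suc numeral_2_eq_2)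
  then show "is_maximal_path P ys"
    using assms steps unfolding is_maximal_path_def is_path_def up_chains_def by blast
  have "loc_max P ys i \<longleftrightarrow> i = length ys - 1" for i
  proof
    assume max: "loc_max P ys i"
    show "i = length ys - 1"
    proof (rule ccontr)
      assume "i \<noteq> length ys - 1"
      then have "Suc i < length ys" "covers P (ys ! Suc i) (ys ! i)" using max by (auto simp: loc_max_def)
      from steps[OF this(1)] this(2) show False by (auto simp: covers_def)
    qed
  next
    assume "i = length ys - 1"
    then show "loc_max P ys i" using assms(1) by (auto simp: loc_max_def up_chains_def)
  qed
  then have "{i. loc_max P ys i} = {length ys - 1}" by auto
  then show "star_cond P ys" by (simp add: star_cond_def lmax_pos_def)
qed

lemma exists_cover:
  assumes "finite P" "x \<in> P" "\<not> maximal_in P x"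
  shows "\<exists>c. covers P x c"
proof -
  have "{y\<in>P. x < y} \<noteq> {}" using assms by (auto simp: maximal_in_def)
  then obtain c where "c \<in> {y\<in>P. x < y}" "\<forall>b\<in>{y\<in>P. x < y}. b \<le> c \<longrightarrow> c = b"
    using finite_has_minimal[of "{y\<in>P. x < y}"] assms(1) by auto
  then have "covers P x c" using assms(2) by (auto simp: covers_def order.strict_iff_order)
  then show ?thesis by blast
qed

text \<open>A longest up-chain ends at a maximal element.\<close>
lemma exists_maximal_up_chain:
  assumes "finite P" "P \<noteq> {}"
  shows "\<exists>ys \<in> up_chains P. maximal_in P (last ys)"
proof -
  obtain m where "minimal_in P m"
    using finite_has_minimal[of P] assms by (auto simp: minimal_in_def order.strict_iff_order)
  then have "[m] \<in> up_chains P" by (auto simp: up_chains_def minimal_in_def)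
  moreover have "length ys < Suc (card P)" if "ys \<in> up_chains P" for ys
  proof -
    have "distinct ys" "set ys \<subseteq> P" using that by (auto simp: up_chains_def)
    then have "length ys \<le> card P" using card_mono[OF assms(1)] distinct_card by metis
    then show ?thesis by simp
  qed
  ultimately obtain ys where ys: "ys \<in> up_chains P"
      and longest: "\<And>zs. zs \<in> up_chains P \<Longrightarrow> length zs \<le> length ys"
    using Lattices_Big.ex_has_greatest_nat[of "\<lambda>ys. ys \<in> up_chains P" "[m]" length] by blast
  have "maximal_in P (last ys)"
  proof (rule ccontr)
    assume "\<not> maximal_in P (last ys)"
    moreover have "last ys \<in> P" using ys by (auto simp: up_chains_def)
    ultimately obtain c where "covers P (last ys) c" using exists_cover[OF assms(1)] by blast
    then show False using longest[OF up_chain_snoc[OF ys]] by simp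
  qed
  then show ?thesis using ys by blast
qed

lemma rank_star_attained:
  assumes "finite P" "P \<noteq> {}"
  shows "\<exists>xs. is_maximal_path P xs \<and> star_cond P xs \<and> len_star P xs = rank_star P"
proof -
  let ?S = "{len_star P xs | xs. is_maximal_path P xs \<and> star_cond P xs}"
  have "len_star P xs \<le> card P" if "is_maximal_path P xs" for xs
  proof -
    have "len_star P xs \<le> card {..<length xs}"
      unfolding len_star_def by (rule card_mono) auto
    also have "\<dots> \<le> card P"
    proof -
      have "distinct xs" "set xs \<subseteq> P" using that by (auto simp: is_maximal_path_def is_path_def)
      then show ?thesis using card_mono[OF assms(1)] distinct_card by (metis card_lessThan)
    qed
    finally show ?thesis .
  qed
  then have "?S \<subseteq> {..card P}" by auto
  then have "finite ?S" by (rule finite_subset) simp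
  moreover have "?S \<noteq> {}"
    using exists_maximal_up_chain[OF assms] up_chain_star_path by blast
  ultimately have "rank_star P \<in> ?S" unfolding rank_star_def by (rule Max_in)
  then show ?thesis by auto
qed

lemma liminf_ratio_ge:
  fixes a :: "nat \<Rightarrow> nat"
  assumes "1 < p" "\<And>e. c * (p ^ e - 1) \<le> a e"
  shows "ereal (real c) \<le> liminf (\<lambda>e. ereal (real (a e) / real (p ^ e)))"
proof -
  have bound: "real c - real c * (1 / real p) ^ e \<le> real (a e) / real (p ^ e)" for e
  proof -
    have "1 \<le> p ^ e" "0 < real (p ^ e)" using assms(1) by simp_all
    then have "real c * (real (p ^ e) - 1) = real (c * (p ^ e - 1))"
      unfolding of_nat_mult of_nat_diff[OF \<open>1 \<le> p ^ e\<close>] by simp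
    also have "\<dots> \<le> real (a e)" using assms(2) by (simp only: of_nat_le_iff)
    finally have "real c * (real (p ^ e) - 1) / real (p ^ e) \<le> real (a e) / real (p ^ e)"
      using \<open>0 < real (p ^ e)\<close> by (simp add: divide_right_mono)
    moreover have "real c * (real (p ^ e) - 1) / real (p ^ e) = real c - real c * (1 / real p) ^ e"
      using \<open>0 < real (p ^ e)\<close> by (simp add: field_simps power_one_over)
    ultimately show ?thesis by simp
  qed
  have "norm (1 / real p) < 1" using assms(1) by (simp add: field_simps)
  then have "(\<lambda>e. (1 / real p) ^ e) \<longlonglongrightarrow> 0" by (rule LIMSEQ_power_zero)
  then have "(\<lambda>e. real c - real c * (1 / real p) ^ e) \<longlonglongrightarrow> real c - real c * 0"
    by (intro tendsto_diff tendsto_mult tendsto_const)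
  then have "(\<lambda>e. ereal (real c - real c * (1 / real p) ^ e)) \<longlonglongrightarrow> ereal (real c)" by simp
  then have "liminf (\<lambda>e. ereal (real c - real c * (1 / real p) ^ e)) = ereal (real c)"
    by (rule lim_imp_Liminf[OF trivial_limit_sequentially])
  then have "ereal (real c) = liminf (\<lambda>e. ereal (real c - real c * (1 / real p) ^ e))" ..
  also have "\<dots> \<le> liminf (\<lambda>e. ereal (real (a e) / real (p ^ e)))"
    by (intro Liminf_mono) (use bound in simp)
  finally show ?thesis .
qed

theorem lemma2p5:
  fixes P :: "'a::order set" and p :: nat
  assumes "finite P" and "P \<noteq> {}"
    and "CHAR('k::field) = p" and "p > 0"
  shows "liminf (\<lambda>e. ereal (real (hibi_nu TYPE('k) P (p ^ e)) / real (p ^ e)))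
           \<ge> ereal (real (rank_star P) + 2)"
proof -
  have "prime CHAR('k)" using assms(3,4) prime_CHAR_semidom by auto
  then have "1 < p" using assms(3) prime_gt_1_nat by blast
  obtain xs where xs: "is_maximal_path P xs" "star_cond P xs" "len_star P xs = rank_star P"
    using rank_star_attained[OF assms(1,2)] by blast
  have "(rank_star P + 2) * (p ^ e - 1) \<le> hibi_nu TYPE('k) P (p ^ e)" for e
    using hibi_nu_ge_path[OF assms(1) xs(1,2) \<open>prime CHAR('k)\<close> refl, of e]
    unfolding xs(3) assms(3) .
  from liminf_ratio_ge[OF \<open>1 < p\<close> this] show ?thesis by (simp add: add.commute)
qed

end
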